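(* Let $m\geq 3$ and $n\in \mathbb{N}$. Then \[ \sigma'_m(n) = -n\, e_{m+2,n}+\sum_{k=1}^{n-1} (-1)^{k+1} \big( \sigma'_m(n-P_{m+2,k})+\sigma'_m(n- Q_{m+2,k}) \big), \] where $P_{m+2,k}=\frac{k(mk-(m-2))}{2}$ and $Q_{m+2,k}=\frac{k(mk+(m-2))}{2}$.
   Context: For $m\ge3$ and $n\in\mathbb{N}$, $\sigma'_m(n)$ is the sum of the positive divisors $d$ of $n$ with $d\equiv 0$, $1$ or $m-1 \pmod m$; set $\sigma'_m(x)=0$ for integers $x\le 0$. For $g\ge5$ and $n\in\mathbb{N}_0$, $e_{g,n}=1$ if $n=0$, $e_{g,n}=(-1)^k$ if $n=P_{g,k}$ or $n=Q_{g,k}$ for some $k\in\mathbb{N}$ (where $P_{g,k}=\frac{k((g-2)k-(g-4))}{2}$, $Q_{g,k}=\frac{k((g-2)k+(g-4))}{2}$), and $e_{g,n}=0$ otherwise. *)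

theory Defs
  imports Main
begin

definition sigma' :: "nat \<Rightarrow> int \<Rightarrow> int" where
  "sigma' m x = (if x \<le> 0 then 0 else
     \<Sum>d \<in> {d. d dvd nat x \<and> (d mod m = 0 \<or> d mod m = 1 \<or> d mod m = m - 1)}. int d)"

definition Pg :: "nat \<Rightarrow> nat \<Rightarrow> int" where
  "Pg g k = (int k * ((int g - 2) * int k - (int g - 4))) div 2"

definition Qg :: "nat \<Rightarrow> nat \<Rightarrow> int" where
  "Qg g k = (int k * ((int g - 2) * int k + (int g - 4))) div 2"

definition eg :: "nat \<Rightarrow> nat \<Rightarrow> int" where
  "eg g n = (if n = 0 then 1
     else if \<exists>k\<ge>1. int n = Pg g k \<or> int n = Qg g k
       then (-1) ^ (THE k. k \<ge> 1 \<and> (int n = Pg g k \<or> int n = Qg g k))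
     else 0)"

end

theory Submission
  imports Defs "HOL-Computational_Algebra.Formal_Power_Series"
begin

(* Let F be the product of the factors 1 - X^j over all j = 0, 1 or -1 (mod m).  By the Jacobi
   triple product, F is the theta series sum_s (-1)^s X^(s (m s - m + 2) / 2), whose exponents are
   the generalized (m+2)-gonal numbers P_k, Q_k; so the coefficient of X^n in F is e_(m+2,n).  On
   the other hand X F'/F = - sum_n sigma'_m(n) X^n, and comparing coefficients of X^n in
   X F' = F (X F'/F) gives the recurrence.  Only coefficients up to X^n matter, so F is replaced by
   the finite product over j <= m n, and the triple product by a finite version derived from the
   q-binomial theorem and truncated modulo X^(n+1). *)

unbundle fps_syntax

section \<open>Gaussian binomial coefficients\<close>

fun gauss_binomial :: "'a::comm_ring_1 \<Rightarrow> nat \<Rightarrow> nat \<Rightarrow> 'a" where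
  "gauss_binomial p 0 j = (if j = 0 then 1 else 0)"
| "gauss_binomial p (Suc N) j =
     (if j = 0 then 1 else p ^ j * gauss_binomial p N j + gauss_binomial p N (j - 1))"

lemma gauss_binomial_eq_0: "N < j \<Longrightarrow> gauss_binomial p N j = 0"
  by (induction N arbitrary: j) auto

lemma gauss_binomial_0_right [simp]: "gauss_binomial p N 0 = 1"
  by (cases N) auto

lemma gauss_binomial_diag [simp]: "gauss_binomial p N N = 1"
  by (induction N) (auto simp: gauss_binomial_eq_0)

theorem q_binomial:
  fixes u v p :: "'a::comm_ring_1"
  shows "(\<Prod>t<N. u + v * p ^ t) =
    (\<Sum>j\<le>N. gauss_binomial p N j * p ^ (j choose 2) * v ^ j * u ^ (N - j))"
proof (induction N arbitrary: v)
  case 0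
  then show ?case by (simp add: numeral_2_eq_2)
next
  case (Suc N)
  define c where "c j = gauss_binomial p N j * p ^ (j choose 2) * v ^ j" for j
  have "(\<Prod>t<Suc N. u + v * p ^ t) = (u + v) * (\<Prod>t<N. u + (v * p) * p ^ t)"
    by (simp only: prod.lessThan_Suc_shift) (simp add: mult.assoc)
  also have "\<dots> = (u + v) * (\<Sum>j\<le>N. c j * p ^ j * u ^ (N - j))"
    unfolding Suc.IH[of "v * p"] by (simp add: c_def power_mult_distrib mult_ac)
  also have "\<dots> = (\<Sum>j\<le>Suc N. p ^ j * c j * u ^ (Suc N - j))
      + (\<Sum>j\<le>N. c j * p ^ j * v * u ^ (N - j))"
    by (simp add: distrib_right sum_distrib_left sum.distrib Suc_diff_le c_def gauss_binomial_eq_0 mult_ac)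
  also have "(\<Sum>j\<le>N. c j * p ^ j * v * u ^ (N - j))
      = (\<Sum>j\<le>Suc N. (if j = 0 then 0 else gauss_binomial p N (j - 1))
          * p ^ (j choose 2) * v ^ j * u ^ (Suc N - j))"
    by (simp only: sum.atMost_Suc_shift) (simp add: c_def numeral_2_eq_2 power_add mult_ac)
  also have "(\<Sum>j\<le>Suc N. p ^ j * c j * u ^ (Suc N - j)) + \<dots>
      = (\<Sum>j\<le>Suc N. gauss_binomial p (Suc N) j * p ^ (j choose 2) * v ^ j * u ^ (Suc N - j))"
    unfolding sum.distrib[symmetric] by (intro sum.cong) (auto simp: c_def algebra_simps)
  finally show ?case .
qed

definition q_pochhammer :: "'a::comm_ring_1 \<Rightarrow> nat \<Rightarrow> 'a" where
  "q_pochhammer p k = (\<Prod>i = 1..k. 1 - p ^ i)"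

lemma q_pochhammer_0 [simp]: "q_pochhammer p 0 = 1"
  by (simp add: q_pochhammer_def)

lemma q_pochhammer_Suc: "q_pochhammer p (Suc k) = q_pochhammer p k * (1 - p ^ Suc k)"
  by (simp add: q_pochhammer_def prod.cl_ivl_Suc)

lemma q_pochhammer_split:
  "k \<le> l \<Longrightarrow> q_pochhammer p l = q_pochhammer p k * (\<Prod>i = Suc k..l. 1 - p ^ i)"
proof -
  assume "k \<le> l"
  then have "{1..l} = {1..k} \<union> {Suc k..l}" by auto
  then show ?thesis
    unfolding q_pochhammer_def by (simp add: prod.union_disjoint[symmetric] ivl_disj_int)
qed

lemma gauss_binomial_mult_q_pochhammer:
  "j \<le> N \<Longrightarrow> gauss_binomial p N j * q_pochhammer p j * q_pochhammer p (N - j) = q_pochhammer p N"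
proof (induction N arbitrary: j)
  case (Suc N)
  show ?case
  proof (cases "j = 0 \<or> j = Suc N")
    case False
    then obtain i where i: "j = Suc i" "i < N"
      using Suc.prems by (metis Suc_le_mono le_neq_implies_less not0_implies_Suc)
    define r where "r = N - j"
    have r: "N - i = Suc r" "Suc N - j = Suc r" using i by (simp_all add: r_def)
    have IH1: "gauss_binomial p N j * q_pochhammer p j * q_pochhammer p r = q_pochhammer p N"
      using Suc.IH[of j] i by (simp add: r_def)
    have IH2: "gauss_binomial p N i * q_pochhammer p i * q_pochhammer p (Suc r) = q_pochhammer p N"
      using Suc.IH[of i] i r by simp
    have "j + Suc r = Suc N" using i by (simp add: r_def)
    then have "p ^ j * p ^ Suc r = p ^ Suc N" by (metis power_add)
    have "gauss_binomial p (Suc N) j * q_pochhammer p j * q_pochhammer p (Suc N - j)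
        = p ^ j * (gauss_binomial p N j * q_pochhammer p j * q_pochhammer p r) * (1 - p ^ Suc r)
          + (gauss_binomial p N i * q_pochhammer p i * q_pochhammer p (Suc r)) * (1 - p ^ j)"
    proof -
      have gb: "gauss_binomial p (Suc N) j = p ^ j * gauss_binomial p N j + gauss_binomial p N i"
        using i by simp
      have qj: "q_pochhammer p j = q_pochhammer p i * (1 - p ^ j)"
        using i by (simp add: q_pochhammer_Suc)
      show ?thesis unfolding gb qj r(2) q_pochhammer_Suc by (simp add: algebra_simps)
    qed
    also have "\<dots> = q_pochhammer p N * (1 - p ^ j * p ^ Suc r)"
      unfolding IH1 IH2 by (simp add: algebra_simps)
    finally show ?thesis
      unfolding \<open>p ^ j * p ^ Suc r = p ^ Suc N\<close> q_pochhammer_Suc .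
  qed (auto simp: gauss_binomial_eq_0)
qed simp

lemma fps_cutoff_mult_cong:
  assumes "fps_cutoff d f = fps_cutoff d f'" "fps_cutoff d g = fps_cutoff d g'"
  shows "fps_cutoff d (f * g) = fps_cutoff d (f' * g')"
  unfolding fps_cutoff_eq_fps_cutoff_iff
proof (intro allI impI)
  fix k assume "k < d"
  then show "(f * g) $ k = (f' * g') $ k"
    using assms unfolding fps_cutoff_eq_fps_cutoff_iff fps_mult_nth by (intro sum.cong) simp_all
qed

lemma fps_cutoff_prod_cong:
  assumes "\<And>i. i \<in> I \<Longrightarrow> fps_cutoff d (f i) = fps_cutoff d (g i)"
  shows "fps_cutoff d (\<Prod>i\<in>I. f i) = fps_cutoff d (\<Prod>i\<in>I. g i)"
  using assms
proof (induction I rule: infinite_finite_induct)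
  case (insert x F)
  have "fps_cutoff d (f x) = fps_cutoff d (g x)" "fps_cutoff d (prod f F) = fps_cutoff d (prod g F)"
    using insert by simp_all
  then show ?case unfolding prod.insert[OF insert.hyps] by (rule fps_cutoff_mult_cong)
qed simp_all

lemma fps_cutoff_prod_one_minus_X_power:
  assumes "\<And>i. i \<in> I \<Longrightarrow> d \<le> e i"
  shows "fps_cutoff d (\<Prod>i\<in>I. 1 - fps_X ^ e i) = fps_cutoff d (1 :: 'a::comm_ring_1 fps)"
proof -
  have "fps_cutoff d (\<Prod>i\<in>I. 1 - fps_X ^ e i) = fps_cutoff d (\<Prod>i\<in>I. 1 :: 'a fps)"
    by (rule fps_cutoff_prod_cong) (auto simp: fps_cutoff_eq_fps_cutoff_iff dest: assms)
  then show ?thesis by simp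
qed

lemma fps_cutoff_prod_one_minus_X_power_power:
  assumes "\<And>i. i \<in> I \<Longrightarrow> d \<le> i"
  shows "fps_cutoff (m * d) (\<Prod>i\<in>I. 1 - (fps_X ^ m) ^ i) = fps_cutoff (m * d) (1 :: 'a::comm_ring_1 fps)"
  unfolding power_mult[symmetric] using assms by (intro fps_cutoff_prod_one_minus_X_power) simp

lemma fps_cutoff_mult_X_power_cong:
  assumes "fps_cutoff d f = fps_cutoff d g" "n \<le> d + k"
  shows "fps_cutoff n (f * fps_X ^ k) = fps_cutoff n (g * fps_X ^ k)"
  unfolding fps_cutoff_eq_fps_cutoff_iff fps_X_power_mult_right_nth
proof (intro allI impI)
  fix i assume "i < n"
  then show "(if i < k then 0 else f $ (i - k)) = (if i < k then 0 else g $ (i - k))"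
    using assms unfolding fps_cutoff_eq_fps_cutoff_iff by simp
qed

lemma fps_neg_one_power_mult_nth: "((-1) ^ k * f) $ i = (-1) ^ k * f $ i"
  for f :: "'a::comm_ring_1 fps"
  by (induction k) simp_all

lemma fps_cutoff_neg_one_power_mult:
  "fps_cutoff n ((-1) ^ k * f) = (-1) ^ k * fps_cutoff n (f :: 'a::comm_ring_1 fps)"
  by (rule fps_ext) (simp add: fps_neg_one_power_mult_nth)

lemma fps_cutoff_sum: "fps_cutoff n (\<Sum>i\<in>A. f i) = (\<Sum>i\<in>A. fps_cutoff n (f i))"
  by (rule fps_ext) (simp add: fps_sum_nth)

lemma q_pochhammer_X_power_nonzero:
  assumes "1 \<le> m"
  shows "q_pochhammer (fps_X ^ m :: 'a::idom fps) k \<noteq> 0"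
proof -
  have "fps_cutoff (m * 1) (q_pochhammer (fps_X ^ m :: 'a fps) k) = fps_cutoff (m * 1) 1"
    unfolding q_pochhammer_def by (rule fps_cutoff_prod_one_minus_X_power_power) simp
  from arg_cong[where f = "\<lambda>f. f $ 0", OF this] have "q_pochhammer (fps_X ^ m :: 'a fps) k $ 0 = 1"
    using assms by simp
  then show ?thesis by auto
qed

text \<open>After cancelling \<open>(X\<^sup>m; X\<^sup>m)\<^sub>b\<close>, \<open>b = max j (N - j)\<close>, only factors \<open>1 - X\<^bsup>mi\<^esup>\<close>
  with \<open>i > min j (N - j)\<close> are left.\<close>

lemma fps_cutoff_gauss_binomial_mult_q_pochhammer:
  fixes j N k m :: nat
  defines "a \<equiv> min j (N - j)"
  assumes "1 \<le> m" "j \<le> N" "a \<le> k"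
  shows "fps_cutoff (m * (a + 1)) (gauss_binomial (fps_X ^ m) N j * q_pochhammer (fps_X ^ m) k)
    = fps_cutoff (m * (a + 1)) (1 :: 'a::idom fps)"
proof -
  define p :: "'a fps" where "p = fps_X ^ m"
  define b where "b = max j (N - j)"
  have ab: "a \<le> b" "b \<le> N" using assms by (auto simp: a_def b_def)
  have binom: "gauss_binomial p N j * q_pochhammer p a * q_pochhammer p b = q_pochhammer p N"
    using gauss_binomial_mult_q_pochhammer[OF \<open>j \<le> N\<close>, of p]
    by (cases "j \<le> N - j") (auto simp: a_def b_def mult_ac)
  have "q_pochhammer p b * (gauss_binomial p N j * q_pochhammer p k)
      = (gauss_binomial p N j * q_pochhammer p a * q_pochhammer p b) * (\<Prod>i = Suc a..k. 1 - p ^ i)"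
    by (simp add: q_pochhammer_split[OF \<open>a \<le> k\<close>] mult_ac)
  also have "\<dots> = q_pochhammer p b * ((\<Prod>i = Suc b..N. 1 - p ^ i) * (\<Prod>i = Suc a..k. 1 - p ^ i))"
    unfolding binom q_pochhammer_split[OF \<open>b \<le> N\<close>] by (simp add: mult_ac)
  finally have "gauss_binomial p N j * q_pochhammer p k
      = (\<Prod>i = Suc b..N. 1 - p ^ i) * (\<Prod>i = Suc a..k. 1 - p ^ i)"
    using q_pochhammer_X_power_nonzero[OF \<open>1 \<le> m\<close>] by (metis mult_left_cancel p_def)
  also have "fps_cutoff (m * (a + 1)) \<dots> = fps_cutoff (m * (a + 1)) (1 * 1)"
    unfolding p_def using ab
    by (intro fps_cutoff_mult_cong fps_cutoff_prod_one_minus_X_power_power) auto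
  finally show ?thesis by (simp add: p_def)
qed

section \<open>Generalized polygonal numbers\<close>

text \<open>\<open>gen_polygonal m s\<close> is the generalized \<open>(m + 2)\<close>-gonal number of index \<open>s \<in> \<int>\<close>;
  \<open>Pg (m + 2) k\<close> and \<open>Qg (m + 2) k\<close> are its values at \<open>k\<close> and \<open>-k\<close>.\<close>

definition gen_polygonal :: "nat \<Rightarrow> int \<Rightarrow> int" where
  "gen_polygonal m s = s * (int m * s - int m + 2) div 2"

lemma two_times_gen_polygonal: "2 * gen_polygonal m s = int m * (s * (s - 1)) + 2 * s"
proof -
  have "even (s * (s - 1))" by simp
  then have "even (int m * (s * (s - 1)) + 2 * s)" by simp
  moreover have "s * (int m * s - int m + 2) = int m * (s * (s - 1)) + 2 * s"
    by (simp add: algebra_simps)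
  ultimately show ?thesis unfolding gen_polygonal_def by simp
qed

lemma int_mult_minus_one_nonneg: "0 \<le> (s :: int) * (s - 1)"
  by (cases "s \<ge> 1") (auto simp: zero_le_mult_iff)

lemma gen_polygonal_nonneg:
  assumes "1 \<le> m"
  shows "0 \<le> gen_polygonal m s"
proof -
  have "s * (s - 1) \<le> int m * (s * (s - 1))"
    using assms int_mult_minus_one_nonneg[of s] by (simp add: mult_le_cancel_right1)
  moreover have "0 \<le> (s + 1) * (s + 1 - 1)" by (rule int_mult_minus_one_nonneg)
  ultimately show ?thesis using two_times_gen_polygonal[of m s] by (simp add: algebra_simps)
qed

lemma abs_le_gen_polygonal:
  assumes "2 \<le> m"
  shows "\<bar>s\<bar> \<le> gen_polygonal m s"
proof (cases "0 \<le> s")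
  case True
  have "0 \<le> int m * (s * (s - 1))" using int_mult_minus_one_nonneg[of s] by simp
  then show ?thesis using two_times_gen_polygonal[of m s] True by simp
next
  case False
  then have "2 * (s * (s - 1)) \<le> int m * (s * (s - 1))"
    using assms int_mult_minus_one_nonneg[of s] by (intro mult_right_mono) auto
  moreover have "- 2 * s \<le> s * (s - 1)"
    using int_mult_minus_one_nonneg[of "s + 1"] by (simp add: algebra_simps)
  ultimately have "2 * (- s) \<le> 2 * gen_polygonal m s"
    using two_times_gen_polygonal[of m s] by linarith
  with False show ?thesis by simp
qed

lemma gen_polygonal_inject:
  assumes "3 \<le> m" "gen_polygonal m a = gen_polygonal m b"
  shows "a = b"
proof (rule ccontr)
  assume "a \<noteq> b"
  have "(a - b) * (int m * (a + b - 1) + 2) = 0"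
    using assms(2) two_times_gen_polygonal[of m a] two_times_gen_polygonal[of m b]
    by (simp add: algebra_simps)
  with \<open>a \<noteq> b\<close> have "int m * (a + b - 1) = - 2" by simp
  then have "int m dvd 2" by (metis dvd_minus_iff dvd_triv_left)
  then have "int m \<le> 2" by (rule zdvd_imp_le) simp
  with assms(1) show False by simp
qed

lemma Pg_eq_gen_polygonal: "Pg (m + 2) k = gen_polygonal m (int k)"
  unfolding Pg_def gen_polygonal_def by (simp add: algebra_simps)

lemma Qg_eq_gen_polygonal: "Qg (m + 2) k = gen_polygonal m (- int k)"
  unfolding Qg_def gen_polygonal_def by (simp add: algebra_simps)

section \<open>A truncated Jacobi triple product\<close>

lemma two_times_choose_two: "2 * int (k choose 2) = int k * (int k - 1)"
  by (induction k) (simp_all add: numeral_2_eq_2 algebra_simps)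

lemma jacobi_exponent_identity:
  assumes "1 \<le> m" "1 \<le> n" "j \<le> 2 * n"
  shows "m * (j choose 2) + (m * n - 1) * (2 * n - j)
    = m * (n choose 2) + (m * n - 1) * n + nat (gen_polygonal m (int j - int n))"
proof -
  define a where "a = m * n - 1"
  define b where "b = 2 * n - j"
  have a: "int a = int m * int n - 1" using assms by (simp add: a_def of_nat_diff)
  have b: "int b = 2 * int n - int j" using assms(3) by (simp add: b_def of_nat_diff)
  have "2 * int (m * (j choose 2) + a * b) = int m * (2 * int (j choose 2)) + 2 * (int a * int b)"
    by simp
  also have "\<dots> = int m * (2 * int (n choose 2)) + 2 * (int a * int n)
      + 2 * gen_polygonal m (int j - int n)"
    unfolding two_times_choose_two a b two_times_gen_polygonal by (simp add: algebra_simps)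
  finally have "int (m * (j choose 2) + a * b)
      = int (m * (n choose 2) + a * n + nat (gen_polygonal m (int j - int n)))"
    using gen_polygonal_nonneg[OF assms(1)] by simp
  then show ?thesis unfolding a_def b_def of_nat_eq_iff .
qed

lemma prod_lessThan_add:
  fixes a b :: nat
  shows "(\<Prod>t<a + b. f t) = (\<Prod>t<a. f t) * (\<Prod>t<b. f (a + t))"
  by (induction b) (simp_all add: mult_ac)

lemma prod_lessThan_fps_X_power_mult:
  "(\<Prod>t<n. fps_X ^ (m * t)) = (fps_X ^ (m * (n choose 2)) :: 'a::comm_ring_1 fps)"
  by (induction n) (simp_all add: numeral_2_eq_2 power_add algebra_simps)

text \<open>The \<open>q\<close>-binomial theorem for \<open>u = X\<^bsup>mn-1\<^esup>\<close>, \<open>v = -1\<close>, \<open>p = X\<^sup>m\<close>: the first \<open>n\<close> factors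
  \<open>X\<^bsup>mn-1\<^esup> - X\<^bsup>mt\<^esup>\<close> give the product over the residue \<open>-1\<close>, the last \<open>n\<close> the product over the
  residue \<open>1\<close>, and a common power of \<open>X\<close> cancels.\<close>

lemma finite_jacobi_triple_product:
  fixes m n :: nat
  assumes "1 \<le> m" "1 \<le> n"
  shows "(\<Prod>k<n. 1 - fps_X ^ (m * k + (m - 1))) * (\<Prod>k<n. 1 - fps_X ^ (m * k + 1)) =
    (\<Sum>j\<le>2 * n. (-1) ^ (n + j) * gauss_binomial (fps_X ^ m) (2 * n) j
       * fps_X ^ nat (gen_polygonal m (int j - int n)) :: 'a::idom fps)"
proof -
  define q :: "'a fps" where "q = fps_X"
  define A where "A = (\<Prod>k<n. 1 - q ^ (m * k + (m - 1)))"
  define B where "B = (\<Prod>k<n. 1 - q ^ (m * k + 1))"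
  define c where "c = m * (n choose 2) + (m * n - 1) * n"
  define g where "g j = nat (gen_polygonal m (int j - int n))" for j
  define f where "f t = q ^ (m * n - 1) + (-1) * (q ^ m) ^ t" for t
  have lower: "(\<Prod>t<n. f t) = (-1) ^ n * q ^ (m * (n choose 2)) * A"
  proof -
    have "f t = (-1) * q ^ (m * t) * (1 - q ^ (m * (n - Suc t) + (m - 1)))" if "t < n" for t
    proof -
      obtain r where "n = Suc t + r" using \<open>t < n\<close> less_iff_Suc_add by auto
      then have "m * n - 1 = m * t + (m * (n - Suc t) + (m - 1))"
        using assms(1) by (simp add: algebra_simps)
      then show ?thesis unfolding f_def by (simp add: power_add power_mult[symmetric] algebra_simps)
    qed
    then have "(\<Prod>t<n. f t) = (\<Prod>t<n. (-1) * q ^ (m * t) * (1 - q ^ (m * (n - Suc t) + (m - 1))))"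
      by (intro prod.cong) auto
    also have "\<dots> = (-1) ^ n * (\<Prod>t<n. q ^ (m * t)) * A"
      unfolding prod.distrib A_def prod.nat_diff_reindex[where g = "\<lambda>k. 1 - q ^ (m * k + (m - 1))"]
      by simp
    finally show ?thesis unfolding q_def prod_lessThan_fps_X_power_mult .
  qed
  have upper: "(\<Prod>t<n. f (n + t)) = q ^ ((m * n - 1) * n) * B"
  proof -
    have "f (n + t) = q ^ (m * n - 1) * (1 - q ^ (m * t + 1))" for t
    proof -
      have "m * (n + t) = (m * n - 1) + (m * t + 1)"
        using assms by (simp add: algebra_simps)
      then have "(q ^ m) ^ (n + t) = q ^ (m * n - 1) * q ^ (m * t + 1)"
        by (metis power_add power_mult)
      then show ?thesis unfolding f_def by (simp add: algebra_simps)
    qed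
    then show ?thesis by (simp add: prod.distrib B_def power_mult)
  qed
  have "q ^ c * ((-1) ^ n * (A * B)) = (\<Prod>t<n. f t) * (\<Prod>t<n. f (n + t))"
    unfolding lower upper c_def power_add by (simp only: mult_ac)
  also have "\<dots> = (\<Prod>t<2 * n. f t)"
    unfolding mult_2 by (rule prod_lessThan_add[symmetric])
  also have "\<dots> = (\<Sum>j\<le>2 * n. gauss_binomial (q ^ m) (2 * n) j * (q ^ m) ^ (j choose 2) * (-1) ^ j
          * (q ^ (m * n - 1)) ^ (2 * n - j))"
    unfolding f_def by (rule q_binomial)
  also have "\<dots> = q ^ c * (\<Sum>j\<le>2 * n. (-1) ^ j * gauss_binomial (q ^ m) (2 * n) j * q ^ g j)"
    unfolding sum_distrib_left
  proof (intro sum.cong refl)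
    fix j assume "j \<in> {..2 * n}"
    let ?a = "m * (j choose 2)" and ?b = "(m * n - 1) * (2 * n - j)"
      and ?s = "(-1) ^ j * gauss_binomial (q ^ m) (2 * n) j"
    have "?a + ?b = c + g j"
      using jacobi_exponent_identity[OF assms] \<open>j \<in> {..2 * n}\<close> by (simp add: c_def g_def)
    have "gauss_binomial (q ^ m) (2 * n) j * (q ^ m) ^ (j choose 2) * (-1) ^ j
        * (q ^ (m * n - 1)) ^ (2 * n - j) = ?s * (q ^ ?a * q ^ ?b)"
      unfolding power_mult[symmetric] by (simp only: mult_ac)
    also have "q ^ ?a * q ^ ?b = q ^ c * q ^ g j"
      unfolding power_add[symmetric] \<open>?a + ?b = c + g j\<close> ..
    finally show "gauss_binomial (q ^ m) (2 * n) j * (q ^ m) ^ (j choose 2) * (-1) ^ j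
        * (q ^ (m * n - 1)) ^ (2 * n - j) = q ^ c * (?s * q ^ g j)"
      by (simp only: mult_ac)
  qed
  finally have "(-1) ^ n * (A * B) = (\<Sum>j\<le>2 * n. (-1) ^ j * gauss_binomial (q ^ m) (2 * n) j * q ^ g j)"
    by (simp add: q_def)
  then have "A * B = (-1) ^ n * (\<Sum>j\<le>2 * n. (-1) ^ j * gauss_binomial (q ^ m) (2 * n) j * q ^ g j)"
    by (metis (no_types, lifting) minus_one_mult_self mult.assoc mult_1)
  then show ?thesis
    by (simp add: A_def B_def q_def g_def sum_distrib_left power_add mult.assoc)
qed

text \<open>The shift by \<open>X\<^bsup>gen_polygonal m (j - n)\<^esup>\<close> pushes the error of
  \<open>fps_cutoff_gauss_binomial_mult_q_pochhammer\<close> beyond degree \<open>n\<close>.\<close>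

lemma jacobi_truncation_bound:
  assumes "2 \<le> m" "j \<le> 2 * n"
  shows "Suc n \<le> m * (min j (2 * n - j) + 1) + nat (gen_polygonal m (int j - int n))"
proof -
  define a where "a = min j (2 * n - j)"
  have "1 \<le> m" using assms(1) by simp
  then obtain G where G: "gen_polygonal m (int j - int n) = int G"
    using nonneg_int_cases[OF gen_polygonal_nonneg] by blast
  have "a = (if j \<le> n then j else 2 * n - j)"
    unfolding a_def min_def by presburger
  then have "int n - int a = \<bar>int j - int n\<bar>"
    using assms(2) by (simp add: of_nat_diff)
  then have "n \<le> a + G"
    using abs_le_gen_polygonal[OF assms(1), of "int j - int n"] G by linarith
  moreover have "2 * (a + 1) \<le> m * (a + 1)" by (rule mult_le_mono1[OF assms(1)])
  ultimately show ?thesis unfolding a_def[symmetric] G by simp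
qed

lemma jacobi_triple_product_cutoff:
  fixes m n :: nat
  assumes "2 \<le> m" "1 \<le> n"
  shows "fps_cutoff (Suc n) (q_pochhammer (fps_X ^ m) n
      * ((\<Prod>k<n. 1 - fps_X ^ (m * k + (m - 1))) * (\<Prod>k<n. 1 - fps_X ^ (m * k + 1))))
    = fps_cutoff (Suc n) (\<Sum>j\<le>2 * n. (-1) ^ (n + j) * fps_X ^ nat (gen_polygonal m (int j - int n))
        :: 'a::idom fps)"
proof -
  define p :: "'a fps" where "p = fps_X ^ m"
  define g where "g j = nat (gen_polygonal m (int j - int n))" for j
  have m: "1 \<le> m" using assms(1) by simp
  have expand: "q_pochhammer p n
        * ((\<Prod>k<n. 1 - fps_X ^ (m * k + (m - 1))) * (\<Prod>k<n. 1 - fps_X ^ (m * k + 1)))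
      = (\<Sum>j\<le>2 * n. (-1) ^ (n + j)
          * (gauss_binomial p (2 * n) j * q_pochhammer p n * fps_X ^ g j))"
    unfolding finite_jacobi_triple_product[OF m assms(2)] sum_distrib_left p_def g_def
    by (intro sum.cong refl) (simp only: mult_ac)
  have trunc: "fps_cutoff (Suc n) (gauss_binomial p (2 * n) j * q_pochhammer p n * fps_X ^ g j)
      = fps_cutoff (Suc n) (1 * fps_X ^ g j)" if "j \<le> 2 * n" for j
    unfolding p_def
    by (rule fps_cutoff_mult_X_power_cong[OF fps_cutoff_gauss_binomial_mult_q_pochhammer])
      (use assms that jacobi_truncation_bound[OF assms(1), of j n] in \<open>auto simp: g_def\<close>)
  show ?thesis
    unfolding expand[unfolded p_def] fps_cutoff_sum fps_cutoff_neg_one_power_mult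
    by (intro sum.cong refl) (simp add: trunc[unfolded p_def g_def] g_def)
qed

text \<open>The terms \<open>|s| \<le> n\<close> of the theta series \<open>\<Sum>\<^sub>s (-1)\<^sup>s X\<^bsup>gen_polygonal m s\<^esup>\<close>.\<close>

definition polygonal_theta :: "nat \<Rightarrow> nat \<Rightarrow> 'a::comm_ring_1 fps" where
  "polygonal_theta m n = 1 + (\<Sum>k = 1..n. (-1) ^ k *
     (fps_X ^ nat (gen_polygonal m (int k)) + fps_X ^ nat (gen_polygonal m (- int k))))"

lemma sum_atMost_double_shift:
  fixes f :: "int \<Rightarrow> 'a::comm_ring_1"
  shows "(\<Sum>j\<le>2 * n. (-1) ^ (n + j) * f (int j - int n))
    = f 0 + (\<Sum>k = 1..n. (-1) ^ k * (f (int k) + f (- int k)))"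
proof (induction n)
  case (Suc n)
  define g where "g j = (-1) ^ (Suc n + j) * f (int j - int (Suc n))" for j
  have "2 * Suc n = Suc (Suc (2 * n))" by simp
  then have split: "(\<Sum>j\<le>2 * Suc n. g j) = g 0 + (\<Sum>j\<le>2 * n. g (Suc j)) + g (Suc (Suc (2 * n)))"
    by (simp only: sum.atMost_Suc[of g "Suc (2 * n)"] sum.atMost_Suc_shift[of g "2 * n"])
  have exponent: "Suc n + Suc (Suc (2 * n)) = Suc n + 2 * Suc n" by simp
  have top: "g (Suc (Suc (2 * n))) = (-1) ^ Suc n * f (int (Suc n))"
    unfolding g_def exponent power_add power_mult by simp
  have bottom: "g 0 = (-1) ^ Suc n * f (- int (Suc n))"
    by (simp add: g_def)
  have shift: "g (Suc j) = (-1) ^ (n + j) * f (int j - int n)" for j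
    by (simp add: g_def)
  have "(\<Sum>j\<le>2 * Suc n. (-1) ^ (Suc n + j) * f (int j - int (Suc n))) = (\<Sum>j\<le>2 * Suc n. g j)"
    by (simp only: g_def)
  also have "\<dots> = (-1) ^ Suc n * (f (int (Suc n)) + f (- int (Suc n)))
      + (\<Sum>j\<le>2 * n. (-1) ^ (n + j) * f (int j - int n))"
    unfolding split top bottom by (simp add: shift algebra_simps)
  also have "\<dots> = f 0 + (\<Sum>k = 1..Suc n. (-1) ^ k * (f (int k) + f (- int k)))"
    unfolding Suc.IH by (simp add: sum.cl_ivl_Suc algebra_simps)
  finally show ?case .
qed simp

lemma polygonal_theta_eq_sum:
  "polygonal_theta m n
    = (\<Sum>j\<le>2 * n. (-1) ^ (n + j) * fps_X ^ nat (gen_polygonal m (int j - int n)))"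
  unfolding polygonal_theta_def
    sum_atMost_double_shift[where f = "\<lambda>s. fps_X ^ nat (gen_polygonal m s)"]
  by (simp add: gen_polygonal_def)

definition jacobi_exponents :: "nat \<Rightarrow> nat \<Rightarrow> nat set" where
  "jacobi_exponents m n = {j \<in> {1..m * n}. j mod m \<in> {0, 1, m - 1}}"

lemma residue_class_eq_image:
  fixes m r :: nat
  assumes "r < m"
  shows "{j \<in> A. j mod m = r} = (\<lambda>q. m * q + r) ` {q. m * q + r \<in> A}"
proof (intro equalityI subsetI)
  fix j assume "j \<in> {j \<in> A. j mod m = r}"
  then show "j \<in> (\<lambda>q. m * q + r) ` {q. m * q + r \<in> A}"
    using div_mult_mod_eq[of j m] by (auto intro!: image_eqI[where x = "j div m"] simp: mult.commute)
qed (use assms in auto)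

lemma mult_add_le_mult_iff:
  fixes m q r n :: nat
  assumes "0 < r" "r \<le> m"
  shows "m * q + r \<le> m * n \<longleftrightarrow> q < n"
proof
  assume "m * q + r \<le> m * n"
  then have "m * q < m * n" using assms(1) by linarith
  then show "q < n" by simp
next
  assume "q < n"
  then have "m * Suc q \<le> m * n" by (intro mult_le_mono2) simp
  then show "m * q + r \<le> m * n" using assms(2) by simp
qed

lemma prod_jacobi_exponents:
  assumes "3 \<le> m"
  shows "(\<Prod>j\<in>jacobi_exponents m n. f j)
    = (\<Prod>k = 1..n. f (m * k)) * (\<Prod>k<n. f (m * k + (m - 1))) * (\<Prod>k<n. f (m * k + 1))"
proof -
  define R where "R r = {j \<in> {1..m * n}. j mod m = r}" for r
  have "jacobi_exponents m n = R 0 \<union> R (m - 1) \<union> R 1"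
    by (auto simp: jacobi_exponents_def R_def)
  moreover have "R 0 \<inter> R (m - 1) = {}" "(R 0 \<union> R (m - 1)) \<inter> R 1 = {}"
    using assms by (auto simp: R_def)
  moreover have "finite (R r)" for r by (simp add: R_def)
  ultimately have split: "(\<Prod>j\<in>jacobi_exponents m n. f j) = prod f (R 0) * prod f (R (m - 1)) * prod f (R 1)"
    by (simp add: prod.union_disjoint)
  have reindex: "prod f (R r) = (\<Prod>k\<in>K. f (m * k + r))"
    if "r < m" "{k. m * k + r \<in> {1..m * n}} = K" for r K
  proof -
    have "inj_on (\<lambda>k. m * k + r) K" using assms by (auto intro: inj_onI)
    moreover have "R r = (\<lambda>k. m * k + r) ` K"
      unfolding R_def residue_class_eq_image[OF that(1)] that(2) ..
    ultimately show ?thesis by (simp add: prod.reindex)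
  qed
  have shifted: "{k. m * k + r \<in> {1..m * n}} = {..<n}" if "0 < r" "r \<le> m" for r
    using mult_add_le_mult_iff[OF that] that by auto
  have "prod f (R 0) = (\<Prod>k = 1..n. f (m * k + 0))"
    by (rule reindex) (use assms in auto)
  moreover have "prod f (R (m - 1)) = (\<Prod>k<n. f (m * k + (m - 1)))"
    using assms by (intro reindex shifted) simp_all
  moreover have "prod f (R 1) = (\<Prod>k<n. f (m * k + 1))"
    using assms by (intro reindex shifted) simp_all
  ultimately show ?thesis unfolding split by simp
qed

lemma jacobi_product_cutoff_eq_polygonal_theta:
  assumes "3 \<le> m" "1 \<le> n"
  shows "fps_cutoff (Suc n) (\<Prod>j\<in>jacobi_exponents m n. 1 - fps_X ^ j)
    = fps_cutoff (Suc n) (polygonal_theta m n :: 'a::idom fps)"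
  using jacobi_triple_product_cutoff[of m n] assms
  unfolding prod_jacobi_exponents[OF assms(1)] polygonal_theta_eq_sum
  by (simp add: q_pochhammer_def power_mult mult.assoc)

lemma gen_polygonal_index_unique:
  assumes "3 \<le> m" "1 \<le> k" "1 \<le> k'"
    and "z = gen_polygonal m (int k) \<or> z = gen_polygonal m (- int k)"
    and "z = gen_polygonal m (int k') \<or> z = gen_polygonal m (- int k')"
  shows "k = k'"
proof -
  obtain s where s: "s \<in> {int k, - int k}" "z = gen_polygonal m s"
    using assms(4) by blast
  obtain s' where s': "s' \<in> {int k', - int k'}" "z = gen_polygonal m s'"
    using assms(5) by blast
  have "gen_polygonal m s = gen_polygonal m s'" using s(2) s'(2) by simp
  then have "s = s'" by (rule gen_polygonal_inject[OF assms(1)])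
  then show ?thesis using s(1) s'(1) assms(2,3) by auto
qed

lemma polygonal_theta_nth:
  assumes "3 \<le> m"
  shows "(polygonal_theta m n :: 'a::comm_ring_1 fps) $ i = (if i = 0 then 1 else 0)
    + (\<Sum>k = 1..n. if int i = gen_polygonal m (int k) \<or> int i = gen_polygonal m (- int k)
        then (-1) ^ k else 0)"
proof -
  have X_nth: "(fps_X ^ nat (gen_polygonal m s) :: 'a fps) $ i = of_bool (int i = gen_polygonal m s)"
    for s using gen_polygonal_nonneg[of m s] assms by auto
  have summand: "((-1) ^ k * (fps_X ^ nat (gen_polygonal m (int k))
      + fps_X ^ nat (gen_polygonal m (- int k)) :: 'a fps)) $ i
      = (if int i = gen_polygonal m (int k) \<or> int i = gen_polygonal m (- int k) then (-1) ^ k else 0)"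
    if "k \<in> {1..n}" for k
  proof -
    have "gen_polygonal m (int k) \<noteq> gen_polygonal m (- int k)"
      using that gen_polygonal_inject[OF assms, of "int k" "- int k"] by auto
    then show ?thesis unfolding fps_neg_one_power_mult_nth fps_add_nth X_nth by auto
  qed
  have "(\<Sum>k = 1..n. ((-1) ^ k * (fps_X ^ nat (gen_polygonal m (int k))
      + fps_X ^ nat (gen_polygonal m (- int k)) :: 'a fps)) $ i)
      = (\<Sum>k = 1..n. if int i = gen_polygonal m (int k) \<or> int i = gen_polygonal m (- int k)
          then (-1) ^ k else 0)"
    by (rule sum.cong[OF refl]) (rule summand)
  then show ?thesis unfolding polygonal_theta_def fps_add_nth fps_sum_nth by simp
qed

lemma eg_eq_polygonal_theta_nth:
  assumes "3 \<le> m" "i \<le> n"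
  shows "eg (m + 2) i = polygonal_theta m n $ i"
proof -
  define P where "P k \<longleftrightarrow> int i = gen_polygonal m (int k) \<or> int i = gen_polygonal m (- int k)" for k
  define T :: int where "T = (if \<exists>k\<ge>1. P k then (-1) ^ (THE k. k \<ge> 1 \<and> P k) else 0)"
  have le: "k \<le> i" if "P k" for k
  proof -
    have "int k \<le> gen_polygonal m (int k)" "int k \<le> gen_polygonal m (- int k)"
      using abs_le_gen_polygonal[of m "int k"] abs_le_gen_polygonal[of m "- int k"] assms(1)
      by simp_all
    then show ?thesis using that unfolding P_def by auto
  qed
  have "eg (m + 2) i = (if i = 0 then 1 else T)"
    unfolding eg_def T_def P_def Pg_eq_gen_polygonal Qg_eq_gen_polygonal ..
  moreover have "(\<Sum>k = 1..n. if P k then (-1) ^ k else 0) = T"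
  proof (cases "\<exists>k\<ge>1. P k")
    case True
    then obtain k where k: "1 \<le> k" "P k" by blast
    have iff: "P k' \<longleftrightarrow> k' = k" if "1 \<le> k'" for k'
      using gen_polygonal_index_unique[OF assms(1) that k(1)] k(2) unfolding P_def by blast
    have "(THE k. k \<ge> 1 \<and> P k) = k"
      by (rule the_equality) (use k iff in auto)
    moreover have "(\<Sum>k' = 1..n. if P k' then (-1) ^ k' else 0) = (\<Sum>k' = 1..n. if k' = k then (-1) ^ k else 0)"
      by (rule sum.cong) (simp_all add: iff)
    moreover have "k \<le> n" using le[OF k(2)] assms(2) by simp
    ultimately show ?thesis using k(1) True by (simp add: T_def)
  qed (simp add: T_def)
  moreover have "T = 0" if "i = 0"
    using that le unfolding T_def by fastforce
  moreover have "(polygonal_theta m n :: int fps) $ i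
      = (if i = 0 then 1 else 0) + (\<Sum>k = 1..n. if P k then (-1) ^ k else 0)"
    using polygonal_theta_nth[OF assms(1), of n i] unfolding P_def .
  ultimately show ?thesis by (cases "i = 0") simp_all
qed

section \<open>The logarithmic derivative\<close>

text \<open>The series \<open>j X\<^sup>j / (1 - X\<^sup>j)\<close>; it equals \<open>- X f' / f\<close> for \<open>f = 1 - X\<^sup>j\<close>.\<close>

definition divisor_series :: "nat \<Rightarrow> 'a::comm_ring_1 fps" where
  "divisor_series j = Abs_fps (\<lambda>k. if 0 < k \<and> j dvd k then of_nat j else 0)"

lemma one_minus_X_power_mult_divisor_series:
  "(1 - fps_X ^ j) * divisor_series j = of_nat j * (fps_X ^ j :: 'a::comm_ring_1 fps)"
proof (rule fps_ext)
  fix k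
  have "k < j \<Longrightarrow> 0 < k \<Longrightarrow> \<not> j dvd k" by (auto dest: dvd_imp_le)
  moreover have "j < k \<Longrightarrow> j dvd (k - j) \<longleftrightarrow> j dvd k" by (simp add: dvd_minus_self)
  ultimately show "((1 - fps_X ^ j) * divisor_series j) $ k = (of_nat j * fps_X ^ j :: 'a fps) $ k"
    by (cases k j rule: linorder_cases)
      (auto simp: algebra_simps fps_X_power_mult_nth divisor_series_def)
qed

lemma fps_X_mult_deriv_X_power: "fps_X * fps_deriv (fps_X ^ e) = of_nat e * (fps_X ^ e :: 'a::comm_ring_1 fps)"
  by (rule fps_ext) (auto simp: fps_of_nat)

lemma fps_X_mult_deriv_prod_one_minus_X_power:
  "fps_X * fps_deriv (\<Prod>i\<in>I. 1 - fps_X ^ e i)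
    = - (\<Prod>i\<in>I. 1 - fps_X ^ e i) * (\<Sum>i\<in>I. divisor_series (e i) :: 'a::comm_ring_1 fps)"
proof (induction I rule: infinite_finite_induct)
  case (insert a I)
  define P :: "'a fps" where "P = (\<Prod>i\<in>I. 1 - fps_X ^ e i)"
  define S :: "'a fps" where "S = (\<Sum>i\<in>I. divisor_series (e i))"
  have "fps_X * fps_deriv ((1 - fps_X ^ e a) * P)
      = (1 - fps_X ^ e a) * (fps_X * fps_deriv P) - (fps_X * fps_deriv (fps_X ^ e a)) * P"
    by (simp add: fps_deriv_mult algebra_simps)
  also have "\<dots> = - ((1 - fps_X ^ e a) * P) * (divisor_series (e a) + S)"
    unfolding fps_X_mult_deriv_X_power one_minus_X_power_mult_divisor_series[symmetric]
      insert.IH[folded P_def S_def] by (simp add: algebra_simps)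
  finally show ?case using insert.hyps by (simp add: P_def S_def)
qed simp_all

lemma sum_divisor_series_nth:
  assumes "finite J"
  shows "(\<Sum>j\<in>J. divisor_series j) $ k = (if k = 0 then 0 else \<Sum>j\<in>{j \<in> J. j dvd k}. of_nat j)"
  using assms by (simp add: fps_sum_nth divisor_series_def sum.inter_filter)

lemma sum_jacobi_exponents_divisor_series_nth:
  assumes "k \<le> m * n"
  shows "(\<Sum>j\<in>jacobi_exponents m n. divisor_series j) $ k = sigma' m (int k)"
proof (cases "k = 0")
  case False
  have "d \<in> {1..m * n}" if "d dvd k" for d
    using that False assms dvd_imp_le[of d k] by (cases d) auto
  then have "{j \<in> jacobi_exponents m n. j dvd k}
      = {d. d dvd k \<and> (d mod m = 0 \<or> d mod m = 1 \<or> d mod m = m - 1)}"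
    by (auto simp: jacobi_exponents_def)
  then show ?thesis
    using False by (simp add: sum_divisor_series_nth jacobi_exponents_def sigma'_def)
qed (simp add: sum_divisor_series_nth jacobi_exponents_def sigma'_def)

lemma of_nat_mult_nth_prod_one_minus_X_power:
  "of_nat n * (\<Prod>i\<in>I. 1 - fps_X ^ e i :: 'a::comm_ring_1 fps) $ n
    = - ((\<Prod>i\<in>I. 1 - fps_X ^ e i) * (\<Sum>i\<in>I. divisor_series (e i))) $ n"
proof -
  have "of_nat n * (\<Prod>i\<in>I. 1 - fps_X ^ e i :: 'a fps) $ n
      = (fps_X * fps_deriv (\<Prod>i\<in>I. 1 - fps_X ^ e i)) $ n"
    by (cases n) simp_all
  then show ?thesis unfolding fps_X_mult_deriv_prod_one_minus_X_power by simp
qed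

lemma polygonal_theta_mult_nth:
  assumes "2 \<le> m" "\<And>k. k \<le> n \<Longrightarrow> S $ k = sigma' m (int k)"
  shows "(polygonal_theta m n * S) $ n = sigma' m (int n) + (\<Sum>k = 1..n - 1. (-1) ^ k *
      (sigma' m (int n - gen_polygonal m (int k)) + sigma' m (int n - gen_polygonal m (- int k))))"
proof -
  define c where "c k = sigma' m (int n - gen_polygonal m (int k))
    + sigma' m (int n - gen_polygonal m (- int k))" for k
  \<comment> \<open>Shifts beyond degree \<open>n\<close> contribute \<open>0\<close>, matching \<open>sigma' m x = 0\<close> for \<open>x \<le> 0\<close>.\<close>
  have X: "(fps_X ^ nat z * S) $ n = sigma' m (int n - z)" if "0 \<le> z" for z
  proof (cases "n < nat z")
    case True
    then show ?thesis by (simp add: fps_X_power_mult_nth sigma'_def)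
  next
    case False
    then have "int (n - nat z) = int n - z" using that by (simp add: of_nat_diff)
    then show ?thesis using False assms(2)[of "n - nat z"] by (simp add: fps_X_power_mult_nth)
  qed
  have "polygonal_theta m n * S = S + (\<Sum>k = 1..n. (-1) ^ k *
      (fps_X ^ nat (gen_polygonal m (int k)) * S + fps_X ^ nat (gen_polygonal m (- int k)) * S))"
    unfolding polygonal_theta_def by (simp add: distrib_right sum_distrib_right mult.assoc)
  then have "(polygonal_theta m n * S) $ n = sigma' m (int n) + (\<Sum>k = 1..n. (-1) ^ k * c k)"
    using assms(1) by (simp add: fps_sum_nth fps_neg_one_power_mult_nth X gen_polygonal_nonneg assms(2) c_def)
  moreover have "c n = 0"
    using abs_le_gen_polygonal[OF assms(1), of "int n"] abs_le_gen_polygonal[OF assms(1), of "- int n"]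
    by (simp add: c_def sigma'_def)
  then have "(\<Sum>k = 1..n. (-1) ^ k * c k) = (\<Sum>k = 1..n - 1. (-1) ^ k * c k)"
    by (cases n) (simp_all add: sum.cl_ivl_Suc)
  ultimately show ?thesis by (simp add: c_def)
qed

theorem theorem2p9:
  fixes m n :: nat
  assumes "m \<ge> 3" and "n \<ge> 1"
  shows "sigma' m (int n) = - int n * eg (m + 2) n
     + (\<Sum>k = 1..n - 1. (-1) ^ (k + 1) *
          (sigma' m (int n - Pg (m + 2) k) + sigma' m (int n - Qg (m + 2) k)))"
proof -
  define F :: "int fps" where "F = (\<Prod>j\<in>jacobi_exponents m n. 1 - fps_X ^ j)"
  define S :: "int fps" where "S = (\<Sum>j\<in>jacobi_exponents m n. divisor_series j)"
  have "fps_cutoff (Suc n) F = fps_cutoff (Suc n) (polygonal_theta m n)"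
    unfolding F_def by (rule jacobi_product_cutoff_eq_polygonal_theta[OF assms])
  then have F_nth: "F $ i = polygonal_theta m n $ i" if "i \<le> n" for i
    using that unfolding fps_cutoff_eq_fps_cutoff_iff by simp
  have S_nth: "S $ k = sigma' m (int k)" if "k \<le> n" for k
    unfolding S_def using that assms(1) order_trans[of k n "m * n"]
    by (intro sum_jacobi_exponents_divisor_series_nth) simp
  have "int n * eg (m + 2) n = int n * F $ n"
    using F_nth[of n] eg_eq_polygonal_theta_nth[OF assms(1), of n n] by simp
  also have "\<dots> = - (F * S) $ n"
    unfolding F_def S_def by (rule of_nat_mult_nth_prod_one_minus_X_power)
  also have "\<dots> = - (polygonal_theta m n * S) $ n"
    using F_nth by (simp add: fps_mult_nth)
  also have "\<dots> = - (sigma' m (int n) + (\<Sum>k = 1..n - 1. (-1) ^ k *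
      (sigma' m (int n - gen_polygonal m (int k)) + sigma' m (int n - gen_polygonal m (- int k)))))"
    using polygonal_theta_mult_nth[OF _ S_nth] assms(1) by simp
  finally show ?thesis
    unfolding Pg_eq_gen_polygonal Qg_eq_gen_polygonal by (simp add: sum_negf)
qed

end
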